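(* Let $G$ be a wireline network, $\mathcal{A}$ an adversary and $\mathcal{S}$ a scheduling policy, and let $\mathcal{D}$ be an arbitrary execution of the wireline system $(G,\mathcal{A},\mathcal{S})$. Let $G^{\equiv}$ be the equivalent network of $G$ and $\mathcal{D}^{\equiv}$ the equivalent execution of the radio routing protocol using scheduling policy $\mathcal{S}$ and the work-conserving transmission oracle against the adversary $\mathcal{A}^{\equiv}$ in $G^{\equiv}$ (all as defined in the context). Then for every packet $p$ of $\mathcal{D}$, every link $e$ of $G$ and every round $t$: $p$ is in the queue of link $e$ at round $t$ in $\mathcal{D}$ if and only if $p^{\equiv}$ is in the queue of node $v^{e}$ at round $t$ in $\mathcal{D}^{\equiv}$.
   Context: Classical wireline adversarial queuing model: a network is a directed graph $G$; time proceeds in synchronous rounds; each directed link $e$ has its own queue of packets waiting to cross $e$; in each round each link transmits at most one packet from its queue, the packet being chosen by the scheduling policy $\mathcal{S}$ (a rule that selects one packet from a set of packets waiting at a queue, based on attributes such as injection time and path); packets are injected by an adversary, each with its complete path (a sequence of links) fixed at injection. Multi-hop radio network model: a network is a graph whose nodes are transceivers; each node keeps a single queue of packets waiting to be forwarded; each packet is injected with its complete path; in each round a node transmits at most one packet, selected from its queue by the scheduling policy; when a node transmits a packet and the next node on the packet's path hears it, the packet leaves the sender's queue and is appended to the recipient's queue (or absorbed if it has reached its destination). A transmission oracle tells each node in each round whether to transmit. The work-conserving oracle lets every node transmit in every round (one packet per round) whenever its queue is nonempty; here the scenario is assumed free of interferences, so every transmitted packet is heard by its intended recipient (in this case proactive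 and reactive hearing control behave identically). Equivalent network: given wireline network $G$, $G^{\equiv}$ has one node $v^{e}$ for each link $e$ of $G$, and for each pair of links $e=(\cdot,u)$ and $f=(u,\cdot)$ of $G$ the node $v^{e}$ is connected to $v^{f}$. The queue of link $e$ in $G$ and the queue of node $v^{e}$ in $G^{\equiv}$ are called equivalent. Equivalent execution: for each packet $p$ injected by $\mathcal{A}$ at some round, $\mathcal{A}^{\equiv}$ injects a packet $p^{\equiv}$ at the same round following the path obtained by replacing each queue (link) on the path of $p$ by its equivalent queue (node); $p^{\equiv}$ may be absorbed at any node pointed to by its last traversed queue. The same scheduling policy $\mathcal{S}$ is used in both systems. *)

theory Defs
  imports Main
begin

text \<open>
Queues are identified by a name of type 'q (links for the wireline system,
nodes for the radio system).
\<close>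

record ('p, 'q) adversary =
  pkts  :: "'p set"
  inj   :: "'p \<Rightarrow> nat"
  route :: "'p \<Rightarrow> 'q list"    (* complete path (sequence of queues), fixed at injection *)

text \<open>A packet descriptor seen by the scheduling policy:
 (packet, injection round, path, index of current queue on the path,
  round of arrival at the current queue).\<close>
type_synonym ('p, 'q) descr = "'p \<times> nat \<times> 'q list \<times> nat \<times> nat"

type_synonym ('p, 'q) policy = "'q \<Rightarrow> nat \<Rightarrow> ('p, 'q) descr set \<Rightarrow> 'p"

definition is_policy :: "('p, 'q) policy \<Rightarrow> bool" where
  "is_policy S \<longleftrightarrow> (\<forall>q t X. X \<noteq> {} \<longrightarrow> (\<exists>d\<in>X. fst d = S q t X))"

text \<open>An execution: state of each packet at (the beginning of) each round:
 None = not in the system (not yet injected, or absorbed);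
 Some (i, a) = waiting in the queue of the i-th element of its path, since round a.\<close>
type_synonym 'p exec = "nat \<Rightarrow> 'p \<Rightarrow> (nat \<times> nat) option"

definition queue :: "('p, 'q) adversary \<Rightarrow> 'p exec \<Rightarrow> nat \<Rightarrow> 'q \<Rightarrow> 'p set" where
  "queue A D t q = {p. \<exists>i a. D t p = Some (i, a) \<and> route A p ! i = q}"

definition waiting :: "('p, 'q) adversary \<Rightarrow> 'p exec \<Rightarrow> nat \<Rightarrow> 'q \<Rightarrow> ('p, 'q) descr set" where
  "waiting A D t q = {(p, inj A p, route A p, i, a) | p i a. D t p = Some (i, a) \<and> route A p ! i = q}"

definition valid_adversary :: "('v \<times> 'v) set \<Rightarrow> ('p, 'v \<times> 'v) adversary \<Rightarrow> bool" where
  "valid_adversary G A \<longleftrightarrow>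
     (\<forall>p\<in>pkts A. route A p \<noteq> [] \<and> set (route A p) \<subseteq> G \<and>
        (\<forall>i. Suc i < length (route A p) \<longrightarrow> snd (route A p ! i) = fst (route A p ! Suc i)))"

definition wire_exec :: "('v \<times> 'v) set \<Rightarrow> ('p, 'v \<times> 'v) adversary \<Rightarrow> ('p, 'v \<times> 'v) policy \<Rightarrow> 'p exec \<Rightarrow> bool" where
  "wire_exec G A S D \<longleftrightarrow>
     (\<forall>p. D 0 p = (if p \<in> pkts A \<and> inj A p = 0 then Some (0, 0) else None)) \<and>
     (\<forall>t p. D (Suc t) p =
        (case D t p of
           None \<Rightarrow> (if p \<in> pkts A \<and> inj A p = Suc t then Some (0, Suc t) else None)
         | Some (i, a) \<Rightarrow>
             (let e = route A p ! i in
              if e \<in> G \<and> p = S e t (waiting A D t e)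
              then (if Suc i < length (route A p) then Some (Suc i, Suc t) else None)
              else Some (i, a))))"

text \<open>Execution of the radio routing protocol in network H = (nodes, edges) with
policy S and transmission oracle orc (orc t v: node v is told to transmit at round t),
interference-free: a packet transmitted by v is heard by the next node w on its path
iff w is a neighbour of v, i.e. (v, w) is an edge; then it is appended to w's queue.\<close>
definition radio_exec :: "'v set \<times> ('v \<times> 'v) set \<Rightarrow> ('p, 'v) adversary \<Rightarrow> ('p, 'v) policy
                          \<Rightarrow> (nat \<Rightarrow> 'v \<Rightarrow> bool) \<Rightarrow> 'p exec \<Rightarrow> bool" where
  "radio_exec H A S orc R \<longleftrightarrow>
     (\<forall>p. R 0 p = (if p \<in> pkts A \<and> inj A p = 0 then Some (0, 0) else None)) \<and>
     (\<forall>t p. R (Suc t) p =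
        (case R t p of
           None \<Rightarrow> (if p \<in> pkts A \<and> inj A p = Suc t then Some (0, Suc t) else None)
         | Some (i, a) \<Rightarrow>
             (let v = route A p ! i in
              if v \<in> fst H \<and> orc t v \<and> p = S v t (waiting A R t v)
              then (if Suc i < length (route A p)
                    then (if (v, route A p ! Suc i) \<in> snd H then Some (Suc i, Suc t) else Some (i, a))
                    else None)
              else Some (i, a))))"

definition work_conserving :: "('p, 'v) adversary \<Rightarrow> 'p exec \<Rightarrow> nat \<Rightarrow> 'v \<Rightarrow> bool" where
  "work_conserving A R t v \<longleftrightarrow> queue A R t v \<noteq> {}"

text \<open>Equivalent network: the node v^e of link e is named by e itself.\<close>
definition vnode :: "'v \<times> 'v \<Rightarrow> 'v \<times> 'v" where
  "vnode e = e"

definition equiv_net :: "('v \<times> 'v) set \<Rightarrow> ('v \<times> 'v) set \<times> (('v \<times> 'v) \<times> ('v \<times> 'v)) set" where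
  "equiv_net G = (vnode ` G, {(vnode e, vnode f) | e f. e \<in> G \<and> f \<in> G \<and> snd e = fst f})"

text \<open>Equivalent adversary: injects p^equiv (named p) at the same round with path
obtained by replacing each link e by node v^e.\<close>
definition equiv_adv :: "('p, 'v \<times> 'v) adversary \<Rightarrow> ('p, 'v \<times> 'v) adversary" where
  "equiv_adv A = A\<lparr>route := (\<lambda>p. map vnode (route A p))\<rparr>"

end

theory Submission
  imports Defs
begin

text \<open>
Both executions start identically and obey the same transition rule, except that in the radio
system a packet moves only if its node is told to transmit and the next node hears it. Under
the work-conserving oracle a node holding the packet always transmits, and in the equivalent
network the next node on a valid path is always a neighbour, so these extra conditions never
block a move. Hence, by induction on the round, the two executions coincide packet by packet.
\<close>

lemma equiv_adv_simps [simp]: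
  "pkts (equiv_adv A) = pkts A" "inj (equiv_adv A) = inj A" "route (equiv_adv A) = route A"
  by (simp_all add: equiv_adv_def vnode_def[abs_def])

lemma fst_equiv_net [simp]: "fst (equiv_net G) = G"
  by (simp add: equiv_net_def vnode_def)

lemma valid_adversary_consecutive_links_adjacent:
  assumes "valid_adversary G A" "p \<in> pkts A" "Suc i < length (route A p)"
  shows "(route A p ! i, route A p ! Suc i) \<in> snd (equiv_net G)"
proof -
  from assms have "route A p ! i \<in> G" "route A p ! Suc i \<in> G"
    unfolding valid_adversary_def by (meson Suc_lessD nth_mem subsetD)+
  moreover from assms have "snd (route A p ! i) = fst (route A p ! Suc i)"
    unfolding valid_adversary_def by blast
  ultimately show ?thesis
    by (cases "route A p ! i", cases "route A p ! Suc i") (auto simp: equiv_net_def vnode_def)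
qed

lemma wire_exec_present_in_pkts:
  assumes "wire_exec G A S D" "D t p \<noteq> None"
  shows "p \<in> pkts A"
  using assms(2)
proof (induction t)
  case 0
  then show ?case using assms(1) unfolding wire_exec_def by (auto split: if_splits)
next
  case (Suc t)
  then show ?case using assms(1) unfolding wire_exec_def
    by (cases "D t p") (auto split: if_splits simp: Let_def)
qed

lemma work_conserving_current_queue:
  assumes "R t p = Some (i, a)"
  shows "work_conserving A R t (route A p ! i)"
  using assms unfolding work_conserving_def queue_def by blast

lemma wire_exec_eq_radio_exec:
  assumes va: "valid_adversary G A"
    and w: "wire_exec G A S D"
    and r: "radio_exec (equiv_net G) (equiv_adv A) S (work_conserving (equiv_adv A) R) R"
  shows "D t = R t"
proof (induction t)
  case 0
  then show ?case using w r unfolding wire_exec_def radio_exec_def by auto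
next
  case (Suc t)
  show ?case
  proof
    fix p
    show "D (Suc t) p = R (Suc t) p"
    proof (cases "D t p")
      case None
      then show ?thesis using Suc w r unfolding wire_exec_def radio_exec_def by simp
    next
      case (Some s)
      then obtain i a where s: "D t p = Some (i, a)" by (cases s) auto
      let ?e = "route A p ! i"
      have "p \<in> pkts A" using wire_exec_present_in_pkts[OF w, of t p] s by simp
      then have adjacent: "Suc i < length (route A p) \<Longrightarrow>
          (?e, route A p ! Suc i) \<in> snd (equiv_net G)"
        using valid_adversary_consecutive_links_adjacent[OF va] by blast
      have transmits: "work_conserving (equiv_adv A) R t ?e"
        using work_conserving_current_queue[of R t p i a "equiv_adv A"] Suc s by simp
      have same_waiting: "waiting (equiv_adv A) R t ?e = waiting A D t ?e"
        using Suc by (simp add: waiting_def)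
      show ?thesis
        using w r s Suc adjacent transmits same_waiting
        unfolding wire_exec_def radio_exec_def by (simp add: Let_def)
    qed
  qed
qed

theorem lemma1:
  fixes G :: "('v \<times> 'v) set" and A :: "('p, 'v \<times> 'v) adversary"
    and S :: "('p, 'v \<times> 'v) policy" and D R :: "'p exec"
  assumes "valid_adversary G A"
    and "is_policy S"
    and "wire_exec G A S D"
    and "radio_exec (equiv_net G) (equiv_adv A) S (work_conserving (equiv_adv A) R) R"
  shows "\<forall>p\<in>pkts A. \<forall>e\<in>G. \<forall>t.
           p \<in> queue A D t e \<longleftrightarrow> p \<in> queue (equiv_adv A) R t (vnode e)"
  using wire_exec_eq_radio_exec[OF assms(1,3,4)] by (simp add: queue_def vnode_def)

end
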